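(* Let $\phi\colon\Gamma\to X$ be a partial flow on a metric space $X$. Let $U\subset X$ be a $\phi$-convex open set with compact closure, and let $\psi=\phi|U$ be the restriction of $\phi$ to $U$. Then the enveloping space $U^e$ of $\psi$ is metrizable.
   Context: A partial flow on a metric space $X$ is a continuous map $\phi\colon\Gamma\to X$ on an open set $\Gamma\subset\mathbb{R}\times X$. It satisfies: $\Gamma_x=\{t:(t,x)\in\Gamma\}$ is a connected set containing $0$; $\Gamma_{\phi_t(x)}=\Gamma_x-t$; $\phi_0=\mathrm{id}$; and $\phi_s\phi_t(x)=\phi_{s+t}(x)$ whenever $s,t,s+t\in\Gamma_x$. Let $J(t)=[0,t]$ if $t\ge0$ and $J(t)=[t,0]$ if $t<0$. For open $U\subset X$, the restriction $\psi=\phi|U$ is the partial flow on $U$ with domain $\Gamma_U=\{(t,x): x\in U,\ J(t)\subset\Gamma_x,\ \phi_{J(t)}(x)\subset U\}$ and $\psi_t(x)=\phi_t(x)$. An open set $U$ is $\phi$-convex if, whenever $t\ge0$, $x\in U$, $\phi_t(x)\in U$ and $\phi_{[0,t]}(x)\subset\overline U$, we have $\phi_{[0,t]}(x)\subset U$. The enveloping space of a partial flow $\psi$ on $U$ is the quotient $U^e=(\mathbb{R}\times U)/\!\sim$ with the quotient topology. Here $\sim$ is the equivalence relation generated by $(r,x)\sim(s,y)$ when $r-s\in\Gamma^\psi_x$ and $y=\psi_{r-s}(x)$. The enveloping flow is induced on $U^e$ by $(s,x)\mapsto(s+t,x)$. *)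

theory Defs
  imports "HOL-Analysis.Analysis"
begin

definition fibre :: "(real \<times> 'a) set \<Rightarrow> 'a \<Rightarrow> real set" where
  "fibre \<Gamma> x = {t. (t, x) \<in> \<Gamma>}"

definition partial_flow :: "(real \<times> 'a::metric_space) set \<Rightarrow> (real \<Rightarrow> 'a \<Rightarrow> 'a) \<Rightarrow> bool" where
  "partial_flow \<Gamma> \<phi> \<longleftrightarrow>
     open \<Gamma> \<and>
     continuous_on \<Gamma> (\<lambda>(t, x). \<phi> t x) \<and>
     (\<forall>x. connected (fibre \<Gamma> x) \<and> 0 \<in> fibre \<Gamma> x) \<and>
     (\<forall>x t. t \<in> fibre \<Gamma> x \<longrightarrow> fibre \<Gamma> (\<phi> t x) = (\<lambda>s. s - t) ` fibre \<Gamma> x) \<and>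
     (\<forall>x. \<phi> 0 x = x) \<and>
     (\<forall>x s t. s \<in> fibre \<Gamma> x \<and> t \<in> fibre \<Gamma> x \<and> s + t \<in> fibre \<Gamma> x
              \<longrightarrow> \<phi> s (\<phi> t x) = \<phi> (s + t) x)"

definition J :: "real \<Rightarrow> real set" where
  "J t = (if t \<ge> 0 then {0..t} else {t..0})"

definition restr_domain :: "(real \<times> 'a) set \<Rightarrow> (real \<Rightarrow> 'a \<Rightarrow> 'a) \<Rightarrow> 'a set \<Rightarrow> (real \<times> 'a) set" where
  "restr_domain \<Gamma> \<phi> U = {(t, x). x \<in> U \<and> J t \<subseteq> fibre \<Gamma> x \<and> (\<lambda>s. \<phi> s x) ` J t \<subseteq> U}"

text \<open>phi-convexity of an open set U (the orbit segment phi_[0,t](x) is only defined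
  when [0,t] lies in the fibre, which is made explicit).\<close>
definition phi_convex :: "(real \<times> 'a::metric_space) set \<Rightarrow> (real \<Rightarrow> 'a \<Rightarrow> 'a) \<Rightarrow> 'a set \<Rightarrow> bool" where
  "phi_convex \<Gamma> \<phi> U \<longleftrightarrow> open U \<and>
     (\<forall>t x. t \<ge> 0 \<and> x \<in> U \<and> {0..t} \<subseteq> fibre \<Gamma> x \<and> \<phi> t x \<in> U \<and> (\<lambda>s. \<phi> s x) ` {0..t} \<subseteq> closure U
            \<longrightarrow> (\<lambda>s. \<phi> s x) ` {0..t} \<subseteq> U)"

definition env_gen :: "(real \<times> 'a) set \<Rightarrow> (real \<Rightarrow> 'a \<Rightarrow> 'a) \<Rightarrow> 'a set
                      \<Rightarrow> real \<times> 'a \<Rightarrow> real \<times> 'a \<Rightarrow> bool" where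
  "env_gen \<Gamma>\<psi> \<psi> U p q \<longleftrightarrow> snd p \<in> U \<and> snd q \<in> U \<and>
     fst p - fst q \<in> fibre \<Gamma>\<psi> (snd p) \<and> snd q = \<psi> (fst p - fst q) (snd p)"

definition env_space :: "(real \<times> 'a) set \<Rightarrow> (real \<Rightarrow> 'a \<Rightarrow> 'a) \<Rightarrow> 'a set \<Rightarrow> (real \<times> 'a) set set" where
  "env_space \<Gamma>\<psi> \<psi> U = (\<lambda>p. Collect (equivclp (env_gen \<Gamma>\<psi> \<psi> U) p)) ` (UNIV \<times> U)"

definition env_topology :: "(real \<times> 'a::topological_space) set \<Rightarrow> (real \<Rightarrow> 'a \<Rightarrow> 'a) \<Rightarrow> 'a set
                           \<Rightarrow> (real \<times> 'a) set topology" where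
  "env_topology \<Gamma>\<psi> \<psi> U = topology (\<lambda>S. S \<subseteq> env_space \<Gamma>\<psi> \<psi> U \<and>
        openin (subtopology euclidean (UNIV \<times> U)) (\<Union>S))"

end

theory Submission
  imports Defs
begin

text \<open>
  By the group law of the flow, the generating relation of \<open>U\<^sup>e\<close> is already an equivalence
  relation on \<open>\<real> \<times> U\<close>, and the saturation of an open set is open, since it is swept out by
  local flow maps; so \<open>U\<^sup>e\<close> is an open quotient of \<open>\<real> \<times> U\<close>. The latter is second countable
  and locally compact because \<open>U\<close> has compact closure, and both properties pass to open quotients.
  The relation is closed: a limit of orbit segments in \<open>U\<close> is an orbit segment in \<open>closure U\<close>
  (the orbit cannot leave the domain of \<open>\<phi>\<close> while it stays in a compact set) with endpoints
  in \<open>U\<close>, hence lies in \<open>U\<close> by \<open>\<phi>\<close>-convexity. An open quotient by a closed relation is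
  Hausdorff, locally compact Hausdorff spaces are regular, and Urysohn's metrization theorem
  concludes.
\<close>

section \<open>Urysohn's metrization theorem\<close>

lemma metrizable_space_if_countable_separating_maps:
  fixes f :: "'i \<Rightarrow> 'a \<Rightarrow> real"
  assumes "countable I" and "t1_space X"
    and cont: "\<And>i. i \<in> I \<Longrightarrow> continuous_map X euclideanreal (f i)"
    and sep: "\<And>W x. openin X W \<Longrightarrow> x \<in> W \<Longrightarrow> \<exists>i\<in>I. f i x < 1 \<and> {z \<in> topspace X. f i z < 1} \<subseteq> W"
  shows "metrizable_space X"
proof -
  define F where "F x = (\<lambda>i\<in>I. f i x)" for x
  define Z where "Z = subtopology (powertop_real I) (F ` topspace X)"
  have contF: "continuous_map X (powertop_real I) F"
    by (auto simp: F_def continuous_map_componentwise cont)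
  have imF: "F ` topspace X = topspace Z"
    using contF continuous_map_image_subset_topspace by (fastforce simp: Z_def)
  have "inj_on F (topspace X)"
  proof (rule inj_onI, rule ccontr)
    fix x y assume xy: "x \<in> topspace X" "y \<in> topspace X" "F x = F y" "x \<noteq> y"
    then obtain W where W: "openin X W" "x \<in> W" "y \<notin> W"
      using \<open>t1_space X\<close> unfolding t1_space_def by blast
    then obtain i where "i \<in> I" "f i x < 1" "{z \<in> topspace X. f i z < 1} \<subseteq> W"
      using sep by blast
    moreover have "f i y = f i x"
      using \<open>i \<in> I\<close> fun_cong[OF xy(3), of i] by (simp add: F_def)
    ultimately show False using xy W by auto
  qed
  moreover have "open_map X Z F"
    unfolding open_map_def
  proof (intro allI impI)
    fix W assume W: "openin X W"
    show "openin Z (F ` W)"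
    proof (subst openin_subopen, intro ballI)
      fix y assume "y \<in> F ` W"
      then obtain x where x: "x \<in> W" "y = F x" by blast
      then obtain i where i: "i \<in> I" "f i x < 1" "{z \<in> topspace X. f i z < 1} \<subseteq> W"
        using sep W by blast
      define O' where "O' = {g \<in> topspace Z. g i \<in> {..<1}}"
      have "continuous_map Z euclideanreal (\<lambda>g. g i)"
        unfolding Z_def using i(1) by (intro continuous_map_from_subtopology continuous_map_product_projection)
      then have "openin Z O'"
        unfolding O'_def using openin_continuous_map_preimage[of Z euclideanreal "\<lambda>g. g i" "{..<1}"]
        by simp
      moreover have "y \<in> O'"
        using x i W imF openin_subset by (fastforce simp: O'_def F_def)
      moreover have "O' \<subseteq> F ` W"
        using i imF by (force simp: O'_def F_def)
      ultimately show "\<exists>T. openin Z T \<and> y \<in> T \<and> T \<subseteq> F ` W" by blast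
    qed
  qed
  moreover have "continuous_map X Z F"
    using contF by (simp add: Z_def continuous_map_in_subtopology)
  ultimately have "X homeomorphic_space Z"
    using imF bijective_open_imp_homeomorphic_map homeomorphic_map_imp_homeomorphic_space by blast
  moreover have "metrizable_space Z"
    unfolding Z_def using \<open>countable I\<close>
    by (auto intro!: metrizable_space_subtopology intro: countable_subset
        simp: metrizable_space_product_topology metrizable_space_euclidean)
  ultimately show ?thesis
    using homeomorphic_metrizable_space by blast
qed

theorem Urysohn_metrization:
  assumes "second_countable X" and "regular_space X" and "Hausdorff_space X"
  shows "metrizable_space X"
proof -
  obtain \<B> where "countable \<B>" and open_\<B>: "\<And>V. V \<in> \<B> \<Longrightarrow> openin X V"
    and base_\<B>: "\<And>W x. openin X W \<Longrightarrow> x \<in> W \<Longrightarrow> \<exists>V\<in>\<B>. x \<in> V \<and> V \<subseteq> W"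
    using \<open>second_countable X\<close> unfolding second_countable_def by metis
  have "normal_space X"
    using assms regular_Lindelof_imp_normal_space second_countable_imp_Lindelof_space by blast
  define I where "I = {(A, B) \<in> \<B> \<times> \<B>. X closure_of A \<subseteq> B}"
  have "\<exists>g. continuous_map X euclideanreal g \<and> (\<forall>z\<in>X closure_of fst i. g z = 0) \<and>
            (\<forall>z\<in>topspace X - snd i. g z = 1)" if "i \<in> I" for i
  proof -
    have "closedin X (topspace X - snd i)" and "disjnt (X closure_of fst i) (topspace X - snd i)"
      using that open_\<B> by (auto simp: I_def disjnt_def)
    then obtain g where "continuous_map X (top_of_set {0..1}) g"
      "g ` (X closure_of fst i) \<subseteq> {0}" "g ` (topspace X - snd i) \<subseteq> {1::real}"
      using Urysohn_lemma[OF \<open>normal_space X\<close>, of "X closure_of fst i" "topspace X - snd i" 0 1]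
      by auto
    then show ?thesis
      by (metis continuous_map_in_subtopology image_subset_iff singletonD)
  qed
  then obtain f where f_cont: "\<And>i. i \<in> I \<Longrightarrow> continuous_map X euclideanreal (f i)"
    and f_zero: "\<And>i z. i \<in> I \<Longrightarrow> z \<in> X closure_of fst i \<Longrightarrow> f i z = 0"
    and f_one: "\<And>i z. i \<in> I \<Longrightarrow> z \<in> topspace X - snd i \<Longrightarrow> f i z = 1"
    by metis
  show ?thesis
  proof (rule metrizable_space_if_countable_separating_maps[of I X f])
    show "countable I"
      using \<open>countable \<B>\<close> by (auto simp: I_def intro: countable_subset[of _ "\<B> \<times> \<B>"])
    show "t1_space X"
      using \<open>Hausdorff_space X\<close> by (rule Hausdorff_imp_t1_space)
    fix W x assume "openin X W" "x \<in> W"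
    then obtain B where "B \<in> \<B>" "x \<in> B" "B \<subseteq> W"
      using base_\<B> by blast
    obtain V C where "openin X V" "closedin X C" "x \<in> V" "V \<subseteq> C" "C \<subseteq> B"
      using \<open>regular_space X\<close> open_\<B>[OF \<open>B \<in> \<B>\<close>] \<open>x \<in> B\<close>
      unfolding neighbourhood_base_of_closedin[symmetric] neighbourhood_base_of by metis
    obtain A where "A \<in> \<B>" "x \<in> A" "A \<subseteq> V"
      using base_\<B> \<open>openin X V\<close> \<open>x \<in> V\<close> by blast
    have "X closure_of A \<subseteq> C"
      using \<open>closedin X C\<close> \<open>A \<subseteq> V\<close> \<open>V \<subseteq> C\<close> by (simp add: closure_of_minimal)
    then have AB: "(A, B) \<in> I"
      using \<open>A \<in> \<B>\<close> \<open>B \<in> \<B>\<close> \<open>C \<subseteq> B\<close> by (auto simp: I_def)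
    have "x \<in> X closure_of A"
      using \<open>x \<in> A\<close> closure_of_subset[OF openin_subset[OF open_\<B>[OF \<open>A \<in> \<B>\<close>]]] by blast
    then have "f (A, B) x < 1" using f_zero[OF AB] by simp
    moreover have "{z \<in> topspace X. f (A, B) z < 1} \<subseteq> W"
      using f_one[OF AB] \<open>B \<subseteq> W\<close> by fastforce
    ultimately show "\<exists>i\<in>I. f i x < 1 \<and> {z \<in> topspace X. f i z < 1} \<subseteq> W"
      using AB by blast
  qed (use f_cont in blast)
qed

section \<open>Quotients by the equivalence closure of a relation\<close>

definition quotient_topology :: "'b topology \<Rightarrow> ('b \<Rightarrow> 'b \<Rightarrow> bool) \<Rightarrow> 'b set topology" where
  "quotient_topology X r =
     topology (\<lambda>T. T \<subseteq> (\<lambda>p. Collect (equivclp r p)) ` topspace X \<and> openin X (\<Union>T))"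

context
  fixes X :: "'b topology" and r :: "'b \<Rightarrow> 'b \<Rightarrow> bool"
  assumes field: "\<And>p q. r p q \<Longrightarrow> p \<in> topspace X \<and> q \<in> topspace X"
begin

lemma equivclp_in_topspace: "equivclp r p q \<Longrightarrow> p \<in> topspace X \<Longrightarrow> q \<in> topspace X"
  by (induction rule: equivclp_induct) (use field in blast)+

lemma Union_equivclp_classes:
  assumes "T \<subseteq> (\<lambda>p. Collect (equivclp r p)) ` topspace X"
  shows "\<Union>T = {x \<in> topspace X. Collect (equivclp r x) \<in> T}"
proof
  show "\<Union>T \<subseteq> {x \<in> topspace X. Collect (equivclp r x) \<in> T}"
  proof
    fix x assume "x \<in> \<Union>T"
    then obtain p where p: "p \<in> topspace X" "Collect (equivclp r p) \<in> T" "equivclp r p x"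
      using assms by auto
    then have "Collect (equivclp r x) = Collect (equivclp r p)"
      by (auto intro: equivclp_trans equivclp_sym)
    with p equivclp_in_topspace show "x \<in> {x \<in> topspace X. Collect (equivclp r x) \<in> T}"
      by auto
  qed
qed auto

lemma openin_quotient_topology:
  "openin (quotient_topology X r) T \<longleftrightarrow>
     T \<subseteq> (\<lambda>p. Collect (equivclp r p)) ` topspace X \<and> openin X (\<Union>T)"
proof -
  define P where "P T \<longleftrightarrow> T \<subseteq> (\<lambda>p. Collect (equivclp r p)) ` topspace X \<and> openin X (\<Union>T)" for T
  have "istopology P"
    unfolding istopology_def
  proof (intro conjI allI impI)
    fix S T assume "P S" "P T"
    moreover have "\<Union>(S \<inter> T) = \<Union>S \<inter> \<Union>T"
      using calculation Union_equivclp_classes[of S] Union_equivclp_classes[of T]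
        Union_equivclp_classes[of "S \<inter> T"]
      by (auto simp: P_def)
    ultimately show "P (S \<inter> T)"
      by (auto simp: P_def)
  next
    fix \<K> assume "\<forall>T\<in>\<K>. P T"
    moreover have "\<Union>(\<Union>\<K>) = (\<Union>T\<in>\<K>. \<Union>T)" by blast
    ultimately show "P (\<Union>\<K>)"
      by (auto simp: P_def)
  qed
  then show ?thesis
    by (simp add: quotient_topology_def P_def[abs_def])
qed

lemma quotient_map_quotient_topology:
  "quotient_map X (quotient_topology X r) (\<lambda>p. Collect (equivclp r p))"
proof -
  define cls where "cls p = Collect (equivclp r p)" for p
  have "\<Union>(cls ` topspace X) = topspace X"
    using equivclp_in_topspace by (auto simp: cls_def)
  then have "openin (quotient_topology X r) (cls ` topspace X)"
    by (simp add: openin_quotient_topology cls_def[abs_def])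
  moreover have "topspace (quotient_topology X r) \<subseteq> cls ` topspace X"
    using openin_topspace[of "quotient_topology X r"]
    unfolding openin_quotient_topology cls_def[abs_def] by blast
  ultimately have "topspace (quotient_topology X r) = cls ` topspace X"
    by (simp add: openin_subset subset_antisym)
  then show ?thesis
    unfolding quotient_map_def
    by (simp add: openin_quotient_topology Union_equivclp_classes cls_def[abs_def])
qed

lemma open_map_quotient_topology:
  assumes "\<And>W. openin X W \<Longrightarrow> openin X {q. \<exists>p\<in>W. equivclp r p q}"
  shows "open_map X (quotient_topology X r) (\<lambda>p. Collect (equivclp r p))"
  unfolding open_map_def
proof (intro allI impI)
  fix W assume "openin X W"
  moreover have "\<Union>((\<lambda>p. Collect (equivclp r p)) ` W) = {q. \<exists>p\<in>W. equivclp r p q}"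
    by blast
  ultimately show "openin (quotient_topology X r) ((\<lambda>p. Collect (equivclp r p)) ` W)"
    using assms openin_subset by (fastforce simp: openin_quotient_topology)
qed

end

lemma Hausdorff_space_open_map_image:
  assumes "open_map X Y f" and "f ` topspace X = topspace Y"
    and separate: "\<And>p q. p \<in> topspace X \<Longrightarrow> q \<in> topspace X \<Longrightarrow> f p \<noteq> f q \<Longrightarrow>
           \<exists>V W. openin X V \<and> openin X W \<and> p \<in> V \<and> q \<in> W \<and> (\<forall>a\<in>V. \<forall>b\<in>W. f a \<noteq> f b)"
  shows "Hausdorff_space Y"
  unfolding Hausdorff_space_def
proof (intro allI impI)
  fix y z assume "y \<in> topspace Y \<and> z \<in> topspace Y \<and> y \<noteq> z"
  then obtain p q where "p \<in> topspace X" "q \<in> topspace X" "y = f p" "z = f q" "f p \<noteq> f q"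
    using \<open>f ` topspace X = topspace Y\<close> by (metis imageE)
  then obtain V W where V: "openin X V" "p \<in> V" and W: "openin X W" "q \<in> W"
    and VW: "\<forall>a\<in>V. \<forall>b\<in>W. f a \<noteq> f b"
    using separate by metis
  have "openin Y (f ` V)" "openin Y (f ` W)"
    using \<open>open_map X Y f\<close> V W by (auto simp: open_map_def)
  moreover have "disjnt (f ` V) (f ` W)"
    using VW by (auto simp: disjnt_def)
  moreover have "y \<in> f ` V" "z \<in> f ` W"
    using V W \<open>y = f p\<close> \<open>z = f q\<close> by auto
  ultimately show "\<exists>V W. openin Y V \<and> openin Y W \<and> y \<in> V \<and> z \<in> W \<and> disjnt V W"
    by (intro exI[of _ "f ` V"] exI[of _ "f ` W"]) simp
qed

lemma separating_balls_if_sequentially_closed: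
  fixes R :: "'b::metric_space \<Rightarrow> 'c::metric_space \<Rightarrow> bool"
  assumes closed: "\<And>a b. (\<And>n. R (a n) (b n)) \<Longrightarrow> a \<longlonglongrightarrow> p \<Longrightarrow> b \<longlonglongrightarrow> q \<Longrightarrow> R p q"
    and "\<not> R p q"
  shows "\<exists>\<epsilon>>0. \<forall>a\<in>ball p \<epsilon>. \<forall>b\<in>ball q \<epsilon>. \<not> R a b"
proof (rule ccontr)
  assume "\<not> ?thesis"
  then have "\<exists>a b. a \<in> ball p (inverse (real (Suc n))) \<and> b \<in> ball q (inverse (real (Suc n))) \<and> R a b"
    for n
    by (meson inverse_positive_iff_positive of_nat_0_less_iff zero_less_Suc)
  then obtain a b where a: "\<And>n. dist (a n) p < inverse (real (Suc n))"
    and b: "\<And>n. dist (b n) q < inverse (real (Suc n))" and R: "\<And>n. R (a n) (b n)"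
    unfolding mem_ball by (metis dist_commute)
  have "a \<longlonglongrightarrow> p"
    unfolding tendsto_dist_iff[of _ p]
    by (rule Lim_null_comparison[OF always_eventually LIMSEQ_inverse_real_of_nat])
      (use a in \<open>simp add: less_imp_le\<close>)
  moreover have "b \<longlonglongrightarrow> q"
    unfolding tendsto_dist_iff[of _ q]
    by (rule Lim_null_comparison[OF always_eventually LIMSEQ_inverse_real_of_nat])
      (use b in \<open>simp add: less_imp_le\<close>)
  ultimately have "R p q"
    using closed R by blast
  with \<open>\<not> R p q\<close> show False ..
qed

section \<open>Second countability and local compactness\<close>

lemma second_countable_euclidean: "second_countable (euclidean :: 'a::second_countable_topology topology)"
proof -
  obtain \<B> :: "'a set set" where "countable \<B>" and open_\<B>: "\<And>C. C \<in> \<B> \<Longrightarrow> open C"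
    and base: "\<And>S. open S \<Longrightarrow> \<exists>U. U \<subseteq> \<B> \<and> S = \<Union>U"
    using univ_second_countable by blast
  show ?thesis
    unfolding second_countable_def
  proof (intro exI[of _ \<B>] conjI ballI allI impI)
    fix W :: "'a set" and x assume "openin euclidean W \<and> x \<in> W"
    then obtain \<U> where "\<U> \<subseteq> \<B>" "W = \<Union>\<U>" "x \<in> W"
      using base by (metis open_openin)
    then show "\<exists>V\<in>\<B>. x \<in> V \<and> V \<subseteq> W" by blast
  next
    show "countable \<B>" by fact
    show "openin euclidean V" if "V \<in> \<B>" for V
      using open_\<B>[OF that] by simp
  qed
qed

lemma second_countable_prod_topology:
  assumes "second_countable X" and "second_countable Y"
  shows "second_countable (prod_topology X Y)"
proof -
  obtain \<A> where \<A>: "countable \<A> \<and> (\<forall>V\<in>\<A>. openin X V) \<and>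
      (\<forall>U x. openin X U \<and> x \<in> U \<longrightarrow> (\<exists>V\<in>\<A>. x \<in> V \<and> V \<subseteq> U))"
    using assms(1) unfolding second_countable_def by (elim exE)
  obtain \<B> where \<B>: "countable \<B> \<and> (\<forall>V\<in>\<B>. openin Y V) \<and>
      (\<forall>U y. openin Y U \<and> y \<in> U \<longrightarrow> (\<exists>V\<in>\<B>. y \<in> V \<and> V \<subseteq> U))"
    using assms(2) unfolding second_countable_def by (elim exE)
  show ?thesis
    unfolding second_countable_def
  proof (intro exI[of _ "(\<lambda>(A, B). A \<times> B) ` (\<A> \<times> \<B>)"] conjI ballI allI impI)
    show "countable ((\<lambda>(A, B). A \<times> B) ` (\<A> \<times> \<B>))"
      using \<A> \<B> by simp
    show "openin (prod_topology X Y) V" if V: "V \<in> (\<lambda>(A, B). A \<times> B) ` (\<A> \<times> \<B>)" for V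
    proof -
      obtain A B where "A \<in> \<A>" "B \<in> \<B>" "V = A \<times> B"
        using V by blast
      moreover from this have "openin X A" "openin Y B"
        using \<A> \<B> by blast+
      ultimately show ?thesis
        using openin_prod_Times_iff[of X Y A B] by blast
    qed
  next
    fix W z assume W: "openin (prod_topology X Y) W \<and> z \<in> W"
    obtain a b where z: "z = (a, b)" by fastforce
    with W have "\<exists>U V. openin X U \<and> openin Y V \<and> a \<in> U \<and> b \<in> V \<and> U \<times> V \<subseteq> W"
      unfolding openin_prod_topology_alt by blast
    then obtain U V where "openin X U" "openin Y V" "fst z \<in> U" "snd z \<in> V" "U \<times> V \<subseteq> W"
      using z by auto
    moreover obtain A where "A \<in> \<A>" "fst z \<in> A" "A \<subseteq> U"
      using \<A> \<open>openin X U\<close> \<open>fst z \<in> U\<close> by meson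
    moreover obtain B where "B \<in> \<B>" "snd z \<in> B" "B \<subseteq> V"
      using \<B> \<open>openin Y V\<close> \<open>snd z \<in> V\<close> by meson
    ultimately show "\<exists>V\<in>(\<lambda>(A, B). A \<times> B) ` (\<A> \<times> \<B>). z \<in> V \<and> V \<subseteq> W"
      by (intro bexI[of _ "A \<times> B"]) (auto simp: mem_Times_iff)
  qed
qed

lemma second_countable_compact:
  fixes K :: "'a::metric_space set"
  assumes "compact K"
  shows "second_countable (top_of_set K)"
proof -
  have "\<exists>k. finite k \<and> K \<subseteq> (\<Union>c\<in>k. ball c (inverse (real (Suc n))))" for n
    using \<open>compact K\<close> unfolding compact_eq_totally_bounded by simp
  then obtain D where "\<And>n. finite (D n)" and D: "\<And>n. K \<subseteq> (\<Union>c\<in>D n. ball c (inverse (real (Suc n))))"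
    by metis
  define \<B> where "\<B> = (\<lambda>(n, c). K \<inter> ball c (inverse (real (Suc n)))) ` Sigma UNIV D"
  show ?thesis
    unfolding second_countable_def
  proof (intro exI[of _ \<B>] conjI ballI allI impI)
    show "countable \<B>"
      unfolding \<B>_def using \<open>\<And>n. finite (D n)\<close> by (intro countable_image countable_SIGMA) (auto intro: countable_finite)
    show "openin (top_of_set K) V" if "V \<in> \<B>" for V
      using that by (auto simp: \<B>_def openin_open_Int)
  next
    fix W x assume "openin (top_of_set K) W \<and> x \<in> W"
    then obtain O' where "open O'" "W = K \<inter> O'" "x \<in> K" "x \<in> O'"
      by (auto simp: openin_open)
    then obtain \<epsilon> where "\<epsilon> > 0" "ball x \<epsilon> \<subseteq> O'"
      by (metis open_contains_ball)
    then obtain n where n: "inverse (real (Suc n)) < \<epsilon> / 2"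
      using reals_Archimedean[of "\<epsilon> / 2"] by auto
    then obtain c where "c \<in> D n" "x \<in> ball c (inverse (real (Suc n)))"
      using D \<open>x \<in> K\<close> by blast
    moreover have "ball c (inverse (real (Suc n))) \<subseteq> ball x \<epsilon>"
    proof
      fix y assume "y \<in> ball c (inverse (real (Suc n)))"
      then show "y \<in> ball x \<epsilon>"
        using \<open>x \<in> ball c (inverse (real (Suc n)))\<close> n dist_triangle3[of x y c] by auto
    qed
    ultimately show "\<exists>V\<in>\<B>. x \<in> V \<and> V \<subseteq> W"
      using \<open>ball x \<epsilon> \<subseteq> O'\<close> \<open>W = K \<inter> O'\<close> \<open>x \<in> K\<close>
      by (intro bexI[of _ "K \<inter> ball c (inverse (real (Suc n)))"]) (auto simp: \<B>_def)
  qed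
qed

lemma top_of_set_real_Times: "top_of_set ((UNIV :: real set) \<times> S) = prod_topology euclideanreal (top_of_set S)"
  by (metis prod_topology_subtopology_eu subtopology_UNIV)

lemma second_countable_real_Times:
  fixes U :: "'a::metric_space set"
  assumes "compact (closure U)"
  shows "second_countable (top_of_set ((UNIV :: real set) \<times> U))"
proof -
  have "top_of_set U = subtopology (top_of_set (closure U)) U"
    by (simp add: subtopology_subtopology closure_subset Int_absorb1)
  then have "second_countable (top_of_set U)"
    using second_countable_compact[OF assms] second_countable_subtopology by metis
  then show ?thesis
    by (simp add: top_of_set_real_Times second_countable_prod_topology second_countable_euclidean)
qed

lemma locally_compact_space_real_Times:
  fixes U :: "'a::metric_space set"
  assumes "open U" and "compact (closure U)"
  shows "locally_compact_space (top_of_set ((UNIV :: real set) \<times> U))"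
proof -
  have "top_of_set U = subtopology (top_of_set (closure U)) U"
    by (simp add: subtopology_subtopology closure_subset Int_absorb1)
  moreover have "locally_compact_space (top_of_set (closure U))"
    using assms(2) by (simp add: compact_imp_locally_compact_space compact_space_subtopology)
  moreover have "openin (top_of_set (closure U)) U"
    unfolding openin_open using assms(1) closure_subset[of U] by blast
  ultimately have "locally_compact_space (top_of_set U)"
    by (metis Hausdorff_space_subtopology Hausdorff_space_euclidean locally_compact_space_open_subset)
  then show ?thesis
    by (simp add: top_of_set_real_Times locally_compact_space_prod_topology locally_compact_space_euclidean)
qed

section \<open>Partial flows and their restrictions\<close>

lemma J_0 [simp]: "J 0 = {0}"
  by (simp add: J_def)

lemma self_in_J: "t \<in> J t"
  by (simp add: J_def)

lemma J_nonneg: "0 \<le> t \<Longrightarrow> J t = {0..t}"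
  by (simp add: J_def)

lemma J_uminus: "\<sigma> \<in> J (- t) \<longleftrightarrow> \<sigma> + t \<in> J t"
  by (auto simp: J_def)

lemma J_add: "\<sigma> \<in> J (t + s) \<Longrightarrow> \<sigma> \<in> J t \<or> \<sigma> - t \<in> J s"
  by (auto simp: J_def split: if_splits)

lemma compact_J: "compact (J t)"
  by (simp add: J_def)

lemma mem_restr_domain:
  "(t, x) \<in> restr_domain \<Gamma> \<phi> U \<longleftrightarrow> x \<in> U \<and> J t \<subseteq> fibre \<Gamma> x \<and> (\<lambda>s. \<phi> s x) ` J t \<subseteq> U"
  by (simp add: restr_domain_def)

lemma env_gen_restr_domain_iff:
  "env_gen (restr_domain \<Gamma> \<phi> U) \<phi> U p q \<longleftrightarrow>
     (fst p - fst q, snd p) \<in> restr_domain \<Gamma> \<phi> U \<and> snd q = \<phi> (fst p - fst q) (snd p)"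
  using self_in_J by (auto simp: env_gen_def fibre_def mem_restr_domain)

lemma env_topology_eq_quotient_topology:
  "env_topology \<Gamma>\<psi> \<psi> U = quotient_topology (top_of_set (UNIV \<times> U)) (env_gen \<Gamma>\<psi> \<psi> U)"
  by (simp add: env_topology_def env_space_def quotient_topology_def)

context
  fixes \<Gamma> :: "(real \<times> 'a::metric_space) set" and \<phi> :: "real \<Rightarrow> 'a \<Rightarrow> 'a"
  assumes flow: "partial_flow \<Gamma> \<phi>"
begin

lemma open_flow_domain: "open \<Gamma>"
  using flow by (simp add: partial_flow_def)

lemma continuous_on_flow: "continuous_on \<Gamma> (\<lambda>(t, x). \<phi> t x)"
  using flow by (simp add: partial_flow_def)

lemma zero_in_fibre: "0 \<in> fibre \<Gamma> x"
  using flow by (simp add: partial_flow_def)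

lemma flow_zero [simp]: "\<phi> 0 x = x"
  using flow by (simp add: partial_flow_def)

lemma flow_add_weak:
  "s \<in> fibre \<Gamma> x \<Longrightarrow> t \<in> fibre \<Gamma> x \<Longrightarrow> s + t \<in> fibre \<Gamma> x \<Longrightarrow> \<phi> s (\<phi> t x) = \<phi> (s + t) x"
  using flow by (simp add: partial_flow_def)

lemma fibre_flow_iff:
  assumes "t \<in> fibre \<Gamma> x"
  shows "s \<in> fibre \<Gamma> (\<phi> t x) \<longleftrightarrow> s + t \<in> fibre \<Gamma> x"
proof -
  have "fibre \<Gamma> (\<phi> t x) = (\<lambda>s. s - t) ` fibre \<Gamma> x"
    using flow assms by (simp add: partial_flow_def)
  moreover have "s \<in> (\<lambda>s. s - t) ` A \<longleftrightarrow> s + t \<in> A" for A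
    by (auto simp: image_iff) (metis add_diff_cancel_right')
  ultimately show ?thesis by simp
qed

lemma open_fibre: "open (fibre \<Gamma> x)"
proof -
  have "fibre \<Gamma> x = (\<lambda>t. (t, x)) -` \<Gamma>"
    by (auto simp: fibre_def)
  then show ?thesis
    using open_flow_domain by (simp add: continuous_open_vimage)
qed

lemma is_interval_fibre: "is_interval (fibre \<Gamma> x)"
  using flow is_interval_connected_1 by (simp add: partial_flow_def)

lemma continuous_on_orbit: "continuous_on (fibre \<Gamma> x) (\<lambda>t. \<phi> t x)"
proof -
  have "(\<lambda>t. (t, x)) ` fibre \<Gamma> x \<subseteq> \<Gamma>"
    by (auto simp: fibre_def)
  then show ?thesis
    using continuous_on_compose2[OF continuous_on_flow continuous_on_Pair[OF continuous_on_id continuous_on_const]]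
    by auto
qed

lemma flow_tendsto:
  assumes "(t, x) \<in> \<Gamma>" and "s \<longlonglongrightarrow> t" and "y \<longlonglongrightarrow> x"
  shows "(\<lambda>n. \<phi> (s n) (y n)) \<longlonglongrightarrow> \<phi> t x"
proof -
  have "isCont (\<lambda>(t, x). \<phi> t x) (t, x)"
    using continuous_on_flow open_flow_domain assms(1) by (simp add: continuous_on_eq_continuous_at)
  from isCont_tendsto_compose[OF this tendsto_Pair[OF assms(2,3)]] show ?thesis
    by simp
qed

lemma open_flow_add_agreement:
  assumes "t \<in> fibre \<Gamma> x"
  shows "open {s \<in> fibre \<Gamma> (\<phi> t x). \<phi> s (\<phi> t x) = \<phi> (s + t) x}"
  unfolding open_contains_ball
proof
  fix s0 assume "s0 \<in> {s \<in> fibre \<Gamma> (\<phi> t x). \<phi> s (\<phi> t x) = \<phi> (s + t) x}"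
  then have s0: "s0 \<in> fibre \<Gamma> (\<phi> t x)" "\<phi> s0 (\<phi> t x) = \<phi> (s0 + t) x"
    by auto
  obtain e where "e > 0" and e: "ball 0 e \<subseteq> fibre \<Gamma> (\<phi> t x) \<inter> fibre \<Gamma> x"
    using open_contains_ball_eq[OF open_Int[OF open_fibre open_fibre]] zero_in_fibre by blast
  obtain e' where "e' > 0" and e': "ball s0 e' \<subseteq> fibre \<Gamma> (\<phi> t x)"
    using open_contains_ball_eq[OF open_fibre] s0(1) by blast
  have "s \<in> fibre \<Gamma> (\<phi> t x) \<and> \<phi> s (\<phi> t x) = \<phi> (s + t) x" if "s \<in> ball s0 (min e e')" for s
  proof -
    have s: "s \<in> fibre \<Gamma> (\<phi> t x)" and h: "s - s0 \<in> fibre \<Gamma> (\<phi> t x) \<inter> fibre \<Gamma> x"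
      using that e e' by (auto simp: dist_real_def)
    have "\<phi> s (\<phi> t x) = \<phi> (s - s0) (\<phi> s0 (\<phi> t x))"
      using flow_add_weak[of "s - s0" "\<phi> t x" s0] h s s0(1) by simp
    also have "\<dots> = \<phi> (s - s0 + (s0 + t)) x"
      using flow_add_weak[of "s - s0" x "s0 + t"] h s s0 fibre_flow_iff[OF assms] by simp
    finally show ?thesis
      using s by simp
  qed
  then show "\<exists>e>0. ball s0 e \<subseteq> {s \<in> fibre \<Gamma> (\<phi> t x). \<phi> s (\<phi> t x) = \<phi> (s + t) x}"
    using \<open>e > 0\<close> \<open>e' > 0\<close> by (intro exI[of _ "min e e'"]) auto
qed

text \<open>The axioms only give the group law when \<open>s\<close>, \<open>t\<close> and \<open>s + t\<close> all lie in the fibre of \<open>x\<close>;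
  connectedness of the fibres removes the condition on \<open>s\<close>.\<close>

lemma flow_add:
  assumes "t \<in> fibre \<Gamma> x" and "s + t \<in> fibre \<Gamma> x"
  shows "\<phi> s (\<phi> t x) = \<phi> (s + t) x"
proof -
  define G where "G = fibre \<Gamma> (\<phi> t x)"
  define T where "T = {s \<in> G. \<phi> s (\<phi> t x) = \<phi> (s + t) x}"
  have "openin (top_of_set G) T"
    using open_flow_add_agreement[OF assms(1)] open_fibre
    by (simp add: G_def T_def openin_open_eq subset_iff)
  moreover have "closedin (top_of_set G) T"
  proof -
    have "continuous_on G (\<lambda>s. \<phi> (s + t) x)"
      using continuous_on_compose2[OF continuous_on_orbit continuous_on_add[OF continuous_on_id continuous_on_const]]
        fibre_flow_iff[OF assms(1)] by (auto simp: G_def)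
    moreover have "continuous_on G (\<lambda>s. \<phi> s (\<phi> t x))"
      unfolding G_def by (rule continuous_on_orbit)
    ultimately show ?thesis
      using closedin_continuous_maps_eq[OF Hausdorff_space_euclidean, of "top_of_set G"]
      by (simp add: T_def continuous_map_iff_continuous)
  qed
  moreover have "0 \<in> T"
    using zero_in_fibre assms(1) by (simp add: G_def T_def)
  moreover have "connected G"
    using flow by (simp add: G_def partial_flow_def)
  ultimately have "T = G"
    unfolding connected_clopen by blast
  then show ?thesis
    using assms fibre_flow_iff by (auto simp: G_def T_def)
qed

lemma flow_inverse: "t \<in> fibre \<Gamma> x \<Longrightarrow> \<phi> (- t) (\<phi> t x) = x"
  using flow_add[of t x "- t"] zero_in_fibre by simp

lemma restr_domain_zero: "x \<in> U \<Longrightarrow> (0, x) \<in> restr_domain \<Gamma> \<phi> U"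
  by (simp add: mem_restr_domain zero_in_fibre)

lemma restr_domain_inverse:
  assumes "(t, x) \<in> restr_domain \<Gamma> \<phi> U"
  shows "(- t, \<phi> t x) \<in> restr_domain \<Gamma> \<phi> U"
proof -
  have t: "t \<in> fibre \<Gamma> x" and J: "J t \<subseteq> fibre \<Gamma> x" "(\<lambda>s. \<phi> s x) ` J t \<subseteq> U"
    and "\<phi> t x \<in> U"
    using assms self_in_J by (auto simp: mem_restr_domain)
  have "\<sigma> \<in> fibre \<Gamma> (\<phi> t x) \<and> \<phi> \<sigma> (\<phi> t x) \<in> U" if "\<sigma> \<in> J (- t)" for \<sigma>
  proof -
    have "\<sigma> + t \<in> J t"
      using that by (simp add: J_uminus)
    then have "\<sigma> + t \<in> fibre \<Gamma> x" "\<phi> (\<sigma> + t) x \<in> U"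
      using J by auto
    then show ?thesis
      using flow_add[OF t] fibre_flow_iff[OF t] by simp
  qed
  with \<open>\<phi> t x \<in> U\<close> show ?thesis
    by (auto simp: mem_restr_domain)
qed

lemma restr_domain_add:
  assumes "(t, x) \<in> restr_domain \<Gamma> \<phi> U" and "(s, \<phi> t x) \<in> restr_domain \<Gamma> \<phi> U"
  shows "(t + s, x) \<in> restr_domain \<Gamma> \<phi> U"
proof -
  have t: "t \<in> fibre \<Gamma> x" and J: "J t \<subseteq> fibre \<Gamma> x" "(\<lambda>\<sigma>. \<phi> \<sigma> x) ` J t \<subseteq> U" and "x \<in> U"
    using assms(1) self_in_J by (auto simp: mem_restr_domain)
  have K: "J s \<subseteq> fibre \<Gamma> (\<phi> t x)" "(\<lambda>\<sigma>. \<phi> \<sigma> (\<phi> t x)) ` J s \<subseteq> U"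
    using assms(2) by (auto simp: mem_restr_domain)
  have "\<sigma> \<in> fibre \<Gamma> x \<and> \<phi> \<sigma> x \<in> U" if "\<sigma> \<in> J (t + s)" for \<sigma>
  proof (cases "\<sigma> \<in> J t")
    case False
    then have "\<sigma> - t \<in> J s"
      using J_add[OF that] by blast
    then have "\<sigma> - t \<in> fibre \<Gamma> (\<phi> t x)" "\<phi> (\<sigma> - t) (\<phi> t x) \<in> U"
      using K by auto
    then show ?thesis
      using flow_add[OF t, of "\<sigma> - t"] fibre_flow_iff[OF t, of "\<sigma> - t"] by simp
  qed (use J in auto)
  with \<open>x \<in> U\<close> show ?thesis
    by (auto simp: mem_restr_domain)
qed

abbreviation env_rel :: "'a set \<Rightarrow> real \<times> 'a \<Rightarrow> real \<times> 'a \<Rightarrow> bool" where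
  "env_rel U \<equiv> env_gen (restr_domain \<Gamma> \<phi> U) \<phi> U"

lemma env_rel_in_domain: "env_rel U p q \<Longrightarrow> snd p \<in> U \<and> snd q \<in> U"
  unfolding env_gen_def by blast

lemma env_rel_refl: "snd p \<in> U \<Longrightarrow> env_rel U p p"
  by (simp add: env_gen_restr_domain_iff restr_domain_zero)

lemma env_rel_sym:
  assumes "env_rel U p q"
  shows "env_rel U q p"
proof -
  have pq: "(fst p - fst q, snd p) \<in> restr_domain \<Gamma> \<phi> U" "snd q = \<phi> (fst p - fst q) (snd p)"
    using assms by (simp_all add: env_gen_restr_domain_iff)
  then have "fst p - fst q \<in> fibre \<Gamma> (snd p)"
    using self_in_J by (auto simp: mem_restr_domain)
  then have "snd p = \<phi> (fst q - fst p) (snd q)"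
    using flow_inverse pq(2) by (metis minus_diff_eq)
  moreover have "(fst q - fst p, snd q) \<in> restr_domain \<Gamma> \<phi> U"
    using restr_domain_inverse[OF pq(1)] pq(2) by simp
  ultimately show ?thesis
    by (simp add: env_gen_restr_domain_iff)
qed

lemma env_rel_trans:
  assumes "env_rel U p q" and "env_rel U q w"
  shows "env_rel U p w"
proof -
  have pq: "(fst p - fst q, snd p) \<in> restr_domain \<Gamma> \<phi> U" "snd q = \<phi> (fst p - fst q) (snd p)"
    and qw: "(fst q - fst w, snd q) \<in> restr_domain \<Gamma> \<phi> U" "snd w = \<phi> (fst q - fst w) (snd q)"
    using assms by (auto simp: env_gen_restr_domain_iff)
  have "(fst p - fst w, snd p) \<in> restr_domain \<Gamma> \<phi> U"
    using restr_domain_add[OF pq(1)] qw(1) pq(2) by fastforce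
  moreover have "snd w = \<phi> (fst p - fst w) (snd p)"
  proof -
    have t: "fst p - fst q \<in> fibre \<Gamma> (snd p)"
      using pq(1) self_in_J by (auto simp: mem_restr_domain)
    moreover have "fst q - fst w \<in> fibre \<Gamma> (\<phi> (fst p - fst q) (snd p))"
      using qw(1) pq(2) self_in_J by (auto simp: mem_restr_domain)
    ultimately have "\<phi> (fst q - fst w) (\<phi> (fst p - fst q) (snd p)) =
        \<phi> (fst q - fst w + (fst p - fst q)) (snd p)"
      using flow_add fibre_flow_iff[OF t] by blast
    then have "\<phi> (fst q - fst w) (\<phi> (fst p - fst q) (snd p)) = \<phi> (fst p - fst w) (snd p)"
      by simp
    then show ?thesis
      using qw(2) pq(2) by simp
  qed
  ultimately show ?thesis
    by (simp add: env_gen_restr_domain_iff)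
qed

lemma equivclp_env_rel:
  assumes "snd p \<in> U"
  shows "equivclp (env_rel U) p q \<longleftrightarrow> env_rel U p q"
proof
  assume "equivclp (env_rel U) p q"
  then show "env_rel U p q"
  proof (induction rule: equivclp_induct)
    case base
    show ?case using assms by (rule env_rel_refl)
  next
    case (step y z)
    then show ?case using env_rel_sym env_rel_trans by metis
  qed
qed (rule r_into_equivclp)

lemma open_restr_domain_slice:
  assumes "open U"
  shows "open {y \<in> U. (u, y) \<in> restr_domain \<Gamma> \<phi> U}"
proof (subst open_subopen, intro ballI)
  fix y0 assume y0: "y0 \<in> {y \<in> U. (u, y) \<in> restr_domain \<Gamma> \<phi> U}"
  define W where "W = \<Gamma> \<inter> (\<lambda>(t, x). \<phi> t x) -` U"
  have "open W"
    using continuous_on_open_vimage[OF open_flow_domain] continuous_on_flow assms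
    unfolding W_def by (metis Int_commute)
  moreover have "J u \<times> {y0} \<subseteq> W"
    using y0 by (auto simp: W_def mem_restr_domain fibre_def)
  ultimately obtain V where "open V" "y0 \<in> V" "J u \<times> V \<subseteq> W"
    using tube_lemma_left[of "euclidean :: real topology" "euclidean :: 'a topology" W "J u" y0]
      compact_J by force
  moreover have "V \<inter> U \<subseteq> {y \<in> U. (u, y) \<in> restr_domain \<Gamma> \<phi> U}"
    using \<open>J u \<times> V \<subseteq> W\<close> by (auto simp: W_def mem_restr_domain fibre_def)
  ultimately show "\<exists>T. open T \<and> y0 \<in> T \<and> T \<subseteq> {y \<in> U. (u, y) \<in> restr_domain \<Gamma> \<phi> U}"
    using assms y0 by (intro exI[of _ "V \<inter> U"]) auto
qed

lemma open_env_rel_saturation: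
  assumes "open U" and "open W"
  shows "open {q. \<exists>p\<in>W. env_rel U p q}"
proof (subst open_subopen, intro ballI)
  fix q assume "q \<in> {q. \<exists>p\<in>W. env_rel U p q}"
  then obtain p where "p \<in> W" "env_rel U q p"
    using env_rel_sym by blast
  define u where "u = fst q - fst p"
  define O' where "O' = {y \<in> U. (u, y) \<in> restr_domain \<Gamma> \<phi> U}"
  define g where "g r = (fst r - u, \<phi> u (snd r))" for r :: "real \<times> 'a"
  have "continuous_on (UNIV \<times> O') g"
  proof -
    have "(\<lambda>r. (u, snd r)) ` (UNIV \<times> O') \<subseteq> \<Gamma>"
      using self_in_J[of u] by (auto simp: O'_def mem_restr_domain fibre_def)
    then have "continuous_on (UNIV \<times> O') (\<lambda>r. \<phi> u (snd r))"
      using continuous_on_compose2[OF continuous_on_flow, of "UNIV \<times> O'" "\<lambda>r. (u, snd r)"]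
      by (simp add: continuous_on_Pair continuous_on_const continuous_on_snd continuous_on_id)
    then show ?thesis
      unfolding g_def by (intro continuous_intros)
  qed
  moreover have "open (UNIV \<times> O')"
    unfolding O'_def by (rule open_Times[OF open_UNIV open_restr_domain_slice[OF assms(1)]])
  ultimately have "open (g -` W \<inter> (UNIV \<times> O'))"
    using continuous_on_open_vimage \<open>open W\<close> by blast
  moreover have "q \<in> g -` W \<inter> (UNIV \<times> O')"
  proof -
    have qp: "(u, snd q) \<in> restr_domain \<Gamma> \<phi> U" "snd p = \<phi> u (snd q)"
      using \<open>env_rel U q p\<close> by (simp_all add: env_gen_restr_domain_iff u_def)
    then have "g q = p"
      by (simp add: g_def u_def prod_eq_iff)
    moreover have "snd q \<in> O'"
      using qp(1) by (simp add: O'_def mem_restr_domain)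
    ultimately show ?thesis
      using \<open>p \<in> W\<close> by (simp add: mem_Times_iff)
  qed
  moreover have "g -` W \<inter> (UNIV \<times> O') \<subseteq> {q. \<exists>p\<in>W. env_rel U p q}"
  proof
    fix r assume r: "r \<in> g -` W \<inter> (UNIV \<times> O')"
    then have "env_rel U r (g r)"
      using self_in_J by (auto simp: O'_def g_def env_gen_restr_domain_iff mem_restr_domain)
    then show "r \<in> {q. \<exists>p\<in>W. env_rel U p q}"
      using r env_rel_sym by blast
  qed
  ultimately show "\<exists>T. open T \<and> q \<in> T \<and> T \<subseteq> {q. \<exists>p\<in>W. env_rel U p q}"
    by blast
qed

lemma flow_uniform_time:
  assumes "compact K"
  obtains \<delta> where "\<delta> > 0" "\<And>z. z \<in> K \<Longrightarrow> \<delta> \<in> fibre \<Gamma> z"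
proof -
  have "{0} \<times> K \<subseteq> \<Gamma>"
    using zero_in_fibre by (auto simp: fibre_def)
  then obtain T where "0 \<in> T" "open T" "T \<times> K \<subseteq> \<Gamma>"
    using Elementary_Topology.tube_lemma[OF assms open_flow_domain] by blast
  moreover obtain e where "e > 0" "ball 0 e \<subseteq> T"
    using \<open>open T\<close> \<open>0 \<in> T\<close> open_contains_ball by blast
  ultimately have "e / 2 \<in> T"
    by (simp add: subset_iff)
  with \<open>e > 0\<close> \<open>T \<times> K \<subseteq> \<Gamma>\<close> show ?thesis
    by (intro that[of "e / 2"]) (auto simp: fibre_def)
qed

lemma fibre_contains_interval:
  assumes "compact K" and "0 \<le> t"
    and orbit: "\<And>\<tau>. 0 \<le> \<tau> \<Longrightarrow> \<tau> < t \<Longrightarrow> \<tau> \<in> fibre \<Gamma> x \<Longrightarrow> \<phi> \<tau> x \<in> K"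
  shows "{0..t} \<subseteq> fibre \<Gamma> x"
proof (rule ccontr)
  assume not_subset: "\<not> {0..t} \<subseteq> fibre \<Gamma> x"
  define D where "D = {0..t} - fibre \<Gamma> x"
  have "bdd_below D"
    by (rule bdd_belowI[of _ 0]) (simp add: D_def)
  moreover have "D \<noteq> {}" "closed D"
    using not_subset open_fibre by (auto simp: D_def intro: closed_Diff)
  ultimately have "Inf D \<in> D"
    using closed_contains_Inf by blast
  then have b: "0 < Inf D" "Inf D \<le> t" "Inf D \<notin> fibre \<Gamma> x"
    using zero_in_fibre[of x] by (auto simp: D_def order_le_less)
  have below: "\<tau> \<in> fibre \<Gamma> x" if "0 \<le> \<tau>" "\<tau> < Inf D" for \<tau>
    using that b(2) cInf_lower[OF _ \<open>bdd_below D\<close>, of \<tau>] by (force simp: D_def)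
  obtain \<delta> where "\<delta> > 0" and \<delta>: "\<And>z. z \<in> K \<Longrightarrow> \<delta> \<in> fibre \<Gamma> z"
    using flow_uniform_time[OF \<open>compact K\<close>] by blast
  \<comment> \<open>Just before the exit time \<open>Inf D\<close> the orbit is in \<open>K\<close>, so it survives a further time \<open>\<delta>\<close>.\<close>
  define \<tau> where "\<tau> = max 0 (Inf D - \<delta> / 2)"
  have \<tau>: "0 \<le> \<tau>" "\<tau> < Inf D" "Inf D \<le> \<delta> + \<tau>"
    using b(1) \<open>\<delta> > 0\<close> by (auto simp: \<tau>_def)
  then have "\<tau> \<in> fibre \<Gamma> x"
    using below by blast
  then have "\<delta> + \<tau> \<in> fibre \<Gamma> x"
    using \<delta>[OF orbit] \<tau> b(2) fibre_flow_iff by simp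
  then have "Inf D \<in> fibre \<Gamma> x"
    using is_interval_fibre[of x] zero_in_fibre[of x] b(1) \<tau>(3)
    unfolding is_interval_1 by (meson less_imp_le)
  with b(3) show False ..
qed

lemma restr_domain_orbit_in_closure:
  assumes "t \<longlonglongrightarrow> t0" and "x \<longlonglongrightarrow> x0" and "\<And>n. (t n, x n) \<in> restr_domain \<Gamma> \<phi> U"
    and "0 \<le> \<tau>" and "\<tau> < t0" and "\<tau> \<in> fibre \<Gamma> x0"
  shows "\<phi> \<tau> x0 \<in> closure U"
proof (rule Lim_in_closed_set[OF closed_closure _ trivial_limit_sequentially])
  show "(\<lambda>n. \<phi> \<tau> (x n)) \<longlonglongrightarrow> \<phi> \<tau> x0"
    using assms(6) by (intro flow_tendsto tendsto_const assms(2)) (simp add: fibre_def)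
  have "\<forall>\<^sub>F n in sequentially. \<tau> < t n"
    using order_tendstoD(1)[OF assms(1,5)] .
  then show "\<forall>\<^sub>F n in sequentially. \<phi> \<tau> (x n) \<in> closure U"
  proof (rule eventually_mono)
    fix n assume "\<tau> < t n"
    then have "\<tau> \<in> J (t n)"
      using assms(4) by (simp add: J_def)
    then have "\<phi> \<tau> (x n) \<in> U"
      using assms(3)[of n] by (auto simp: mem_restr_domain)
    then show "\<phi> \<tau> (x n) \<in> closure U"
      using closure_subset by blast
  qed
qed

lemma restr_domain_sequentially_closed:
  assumes convex: "phi_convex \<Gamma> \<phi> U" and "compact (closure U)"
    and "t \<longlonglongrightarrow> t0" and "x \<longlonglongrightarrow> x0" and "(\<lambda>n. \<phi> (t n) (x n)) \<longlonglongrightarrow> y0"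
    and "\<And>n. (t n, x n) \<in> restr_domain \<Gamma> \<phi> U" and "x0 \<in> U" and "y0 \<in> U" and "0 \<le> t0"
  shows "(t0, x0) \<in> restr_domain \<Gamma> \<phi> U \<and> \<phi> t0 x0 = y0"
proof -
  have orbit: "\<phi> \<tau> x0 \<in> closure U" if "0 \<le> \<tau>" "\<tau> < t0" "\<tau> \<in> fibre \<Gamma> x0" for \<tau>
    using restr_domain_orbit_in_closure assms(3,4,6) that by blast
  have fib: "{0..t0} \<subseteq> fibre \<Gamma> x0"
    using fibre_contains_interval[OF \<open>compact (closure U)\<close> \<open>0 \<le> t0\<close> orbit] .
  then have "(\<lambda>n. \<phi> (t n) (x n)) \<longlonglongrightarrow> \<phi> t0 x0"
    using \<open>0 \<le> t0\<close> by (intro flow_tendsto assms(3,4)) (auto simp: fibre_def)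
  then have y0: "\<phi> t0 x0 = y0"
    using assms(5) LIMSEQ_unique by blast
  have "(\<lambda>s. \<phi> s x0) ` {0..t0} \<subseteq> closure U"
  proof
    fix z assume "z \<in> (\<lambda>s. \<phi> s x0) ` {0..t0}"
    then obtain s where s: "s \<in> {0..t0}" "z = \<phi> s x0" by blast
    show "z \<in> closure U"
    proof (cases "s < t0")
      case True
      moreover have "s \<in> fibre \<Gamma> x0"
        using fib s(1) by blast
      ultimately show ?thesis
        using orbit[of s] s by simp
    next
      case False
      then show ?thesis
        using s y0 \<open>y0 \<in> U\<close> closure_subset by auto
    qed
  qed
  then have "(\<lambda>s. \<phi> s x0) ` {0..t0} \<subseteq> U"
    using convex \<open>0 \<le> t0\<close> \<open>x0 \<in> U\<close> fib y0 \<open>y0 \<in> U\<close> unfolding phi_convex_def by blast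
  with fib y0 \<open>x0 \<in> U\<close> \<open>0 \<le> t0\<close> show ?thesis
    by (simp add: mem_restr_domain J_nonneg)
qed

lemma env_rel_sequentially_closed:
  assumes "phi_convex \<Gamma> \<phi> U" and "compact (closure U)"
    and "a \<longlonglongrightarrow> p" and "b \<longlonglongrightarrow> q" and "\<And>n. env_rel U (a n) (b n)"
    and "snd p \<in> U" and "snd q \<in> U"
  shows "env_rel U p q"
proof -
  have forward: "env_rel U p q"
    if "fst q \<le> fst p" "a \<longlonglongrightarrow> p" "b \<longlonglongrightarrow> q" "\<And>n. env_rel U (a n) (b n)" "snd p \<in> U" "snd q \<in> U"
    for a b p q
  proof -
    have "(\<lambda>n. fst (a n) - fst (b n)) \<longlonglongrightarrow> fst p - fst q"
      using that(2,3) by (intro tendsto_intros)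
    moreover have "(\<lambda>n. \<phi> (fst (a n) - fst (b n)) (snd (a n))) \<longlonglongrightarrow> snd q"
      using tendsto_snd[OF that(3)] that(4) by (simp add: env_gen_restr_domain_iff)
    moreover have "(fst (a n) - fst (b n), snd (a n)) \<in> restr_domain \<Gamma> \<phi> U" for n
      using that(4) by (simp add: env_gen_restr_domain_iff)
    ultimately show ?thesis
      using restr_domain_sequentially_closed[OF assms(1,2) _ tendsto_snd[OF that(2)]] that(1,5,6)
      by (simp add: env_gen_restr_domain_iff)
  qed
  show ?thesis
  proof (cases "fst q \<le> fst p")
    case False
    have "env_rel U q p"
      by (rule forward) (use False assms(3-7) in \<open>auto intro: env_rel_sym\<close>)
    then show ?thesis
      by (rule env_rel_sym)
  qed (use assms forward in blast)
qed

section \<open>The enveloping space\<close>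

lemma env_rel_in_topspace:
  "env_rel U p q \<Longrightarrow> p \<in> topspace (top_of_set ((UNIV :: real set) \<times> U)) \<and> q \<in> topspace (top_of_set ((UNIV :: real set) \<times> U))"
  using env_rel_in_domain by (simp add: mem_Times_iff)

lemma quotient_map_env_topology:
  "quotient_map (top_of_set ((UNIV :: real set) \<times> U)) (env_topology (restr_domain \<Gamma> \<phi> U) \<phi> U)
     (\<lambda>p. Collect (equivclp (env_rel U) p))"
  unfolding env_topology_eq_quotient_topology
  using env_rel_in_topspace by (rule quotient_map_quotient_topology)

lemma open_map_env_topology:
  assumes "open U"
  shows "open_map (top_of_set ((UNIV :: real set) \<times> U)) (env_topology (restr_domain \<Gamma> \<phi> U) \<phi> U)
     (\<lambda>p. Collect (equivclp (env_rel U) p))"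
  unfolding env_topology_eq_quotient_topology
proof (rule open_map_quotient_topology)
  have S: "open ((UNIV :: real set) \<times> U)"
    using assms by (simp add: open_Times)
  fix W assume "openin (top_of_set ((UNIV :: real set) \<times> U)) W"
  then have "open W" "W \<subseteq> UNIV \<times> U"
    using openin_open_eq[OF S] by auto
  then have "snd p \<in> U" if "p \<in> W" for p
    using that by auto
  then have "{q. \<exists>p\<in>W. equivclp (env_rel U) p q} = {q. \<exists>p\<in>W. env_rel U p q}"
    by (intro Collect_cong bex_cong refl equivclp_env_rel)
  moreover have "{q. \<exists>p\<in>W. env_rel U p q} \<subseteq> UNIV \<times> U"
    using env_rel_in_domain by (auto simp: mem_Times_iff)
  moreover have "open {q. \<exists>p\<in>W. env_rel U p q}"
    using open_env_rel_saturation[OF assms \<open>open W\<close>] .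
  ultimately show "openin (top_of_set ((UNIV :: real set) \<times> U)) {q. \<exists>p\<in>W. equivclp (env_rel U) p q}"
    using openin_open_eq[OF S] by simp
qed (rule env_rel_in_topspace)

lemma Hausdorff_space_env_topology:
  assumes "open U" and "phi_convex \<Gamma> \<phi> U" and "compact (closure U)"
  shows "Hausdorff_space (env_topology (restr_domain \<Gamma> \<phi> U) \<phi> U)"
proof (rule Hausdorff_space_open_map_image[OF open_map_env_topology[OF assms(1)]])
  show "(\<lambda>p. Collect (equivclp (env_rel U) p)) ` topspace (top_of_set ((UNIV :: real set) \<times> U)) =
      topspace (env_topology (restr_domain \<Gamma> \<phi> U) \<phi> U)"
    using quotient_map_env_topology by (rule quotient_imp_surjective_map)
next
  fix p q
  assume "p \<in> topspace (top_of_set ((UNIV :: real set) \<times> U))" "q \<in> topspace (top_of_set ((UNIV :: real set) \<times> U))"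
    and "Collect (equivclp (env_rel U) p) \<noteq> Collect (equivclp (env_rel U) q)"
  then have pq: "snd p \<in> U" "snd q \<in> U" and "\<not> env_rel U p q"
    by (auto simp: mem_Times_iff intro: equivclp_trans equivclp_sym r_into_equivclp)
  then obtain \<epsilon> where "\<epsilon> > 0" and \<epsilon>: "\<forall>a\<in>ball p \<epsilon>. \<forall>b\<in>ball q \<epsilon>. \<not> env_rel U a b"
    using separating_balls_if_sequentially_closed[of "env_rel U" p q]
      env_rel_sequentially_closed[OF assms(2,3) _ _ _ pq] by blast
  have "openin (top_of_set ((UNIV :: real set) \<times> U)) (((UNIV :: real set) \<times> U) \<inter> ball r \<epsilon>)" for r
    by (rule openin_open_Int[OF open_ball])
  moreover have "Collect (equivclp (env_rel U) a) \<noteq> Collect (equivclp (env_rel U) b)"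
    if "a \<in> ((UNIV :: real set) \<times> U) \<inter> ball p \<epsilon>" "b \<in> ((UNIV :: real set) \<times> U) \<inter> ball q \<epsilon>" for a b
  proof
    assume "Collect (equivclp (env_rel U) a) = Collect (equivclp (env_rel U) b)"
    then have "equivclp (env_rel U) a b"
      by (metis equivclp_refl mem_Collect_eq)
    moreover have "snd a \<in> U"
      using that(1) by auto
    ultimately have "env_rel U a b"
      using equivclp_env_rel by blast
    moreover have "a \<in> ball p \<epsilon>" "b \<in> ball q \<epsilon>"
      using that by auto
    ultimately show False
      using \<epsilon> by blast
  qed
  ultimately show "\<exists>V W. openin (top_of_set ((UNIV :: real set) \<times> U)) V \<and> openin (top_of_set ((UNIV :: real set) \<times> U)) W \<and>
      p \<in> V \<and> q \<in> W \<and> (\<forall>a\<in>V. \<forall>b\<in>W. Collect (equivclp (env_rel U) a) \<noteq> Collect (equivclp (env_rel U) b))"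
    using \<open>\<epsilon> > 0\<close> \<open>p \<in> topspace (top_of_set ((UNIV :: real set) \<times> U))\<close> \<open>q \<in> topspace (top_of_set ((UNIV :: real set) \<times> U))\<close>
    by (intro exI[of _ "((UNIV :: real set) \<times> U) \<inter> ball p \<epsilon>"] exI[of _ "((UNIV :: real set) \<times> U) \<inter> ball q \<epsilon>"]) simp
qed

end

theorem mainTheorem2:
  fixes \<Gamma> :: "(real \<times> 'a::metric_space) set" and \<phi> :: "real \<Rightarrow> 'a \<Rightarrow> 'a" and U :: "'a set"
  assumes "partial_flow \<Gamma> \<phi>"
    and "open U"
    and "phi_convex \<Gamma> \<phi> U"
    and "compact (closure U)"
  shows "metrizable_space (env_topology (restr_domain \<Gamma> \<phi> U) \<phi> U)"
proof (rule Urysohn_metrization)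
  let ?X = "top_of_set ((UNIV :: real set) \<times> U)"
  let ?Y = "env_topology (restr_domain \<Gamma> \<phi> U) \<phi> U"
  let ?cls = "\<lambda>p. Collect (equivclp (env_gen (restr_domain \<Gamma> \<phi> U) \<phi> U) p)"
  have quotient: "quotient_map ?X ?Y ?cls"
    using assms(1) by (rule quotient_map_env_topology)
  have continuous: "continuous_map ?X ?Y ?cls"
    using quotient by (rule quotient_imp_continuous_map)
  have onto: "?cls ` topspace ?X = topspace ?Y"
    using quotient by (rule quotient_imp_surjective_map)
  have open_map: "open_map ?X ?Y ?cls"
    using assms(1,2) by (rule open_map_env_topology)
  show "second_countable ?Y"
    using second_countable_open_map_image[OF continuous open_map onto second_countable_real_Times[OF assms(4)]] .
  show "Hausdorff_space ?Y"
    using Hausdorff_space_env_topology[OF assms] .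
  moreover have "locally_compact_space ?Y"
    using locally_compact_space_continuous_open_map_image[OF continuous open_map onto
        locally_compact_space_real_Times[OF assms(2,4)]] .
  ultimately show "regular_space ?Y"
    using locally_compact_Hausdorff_imp_regular_space by blast
qed

end
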